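(* Let $(X,u)$ be a regular Čech closure space and $(Y,v)$ an arbitrary Čech closure space, and let $Y^X$ be the set of all continuous maps $(X,u)\to(Y,v)$. For every interior cover $\mathcal C$ of $X$, the $\mathcal C$-topology on $Y^X$ is admissible.
   Context: A Čech closure space $(X,u)$ is a set $X$ with an operator $u:\mathcal P(X)\to\mathcal P(X)$ satisfying $u(\emptyset)=\emptyset$, $A\subset u(A)$, and $u(A\cup B)=u(A)\cup u(B)$. The interior is $\mathrm{int}_u A=X\setminus u(X\setminus A)$; $U$ is a neighbourhood of a point $x$ (of a set $A$) if $x\in\mathrm{int}_uU$ ($A\subset\mathrm{int}_uU$). $(X,u)$ is regular if for each $x\in X$ and $A\subset X$ with $x\notin u(A)$ there are disjoint neighbourhoods of $x$ and of $A$. A map $f:(X,u)\to(Y,v)$ is continuous if $f(u(A))\subset v(f(A))$ for all $A$. An interior cover of $X$ is a family $\mathcal C$ of subsets of $X$ such that $\{\mathrm{int}_uC: C\in\mathcal C\}$ covers $X$. Let $\mathcal V=\{V\subset Y:\mathrm{int}_vV\ne\emptyset\}$ and for $A\subset X$, $V\subset Y$ let $(A,V)=\{f\in Y^X: f(A)\subset V\}$. The $\mathcal C$-topology is the topology on $Y^X$ generated by the subbase $\{(u(K),V): V\in\mathcal V,\ K\subset X \text{ with } u(K)\subset C \text{ for some } C\in\mathcal C\}$. The product $(Z,w)\times(X,u)$ is $Z\times X$ with the closure operator for which the sets $W\times U$ ($W$ a neighbourhood of $z$, $U$ of $x$) form a neighbourhood base at $(z,x)$; for $g:Z\times X\to Y$,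 $g^*(z)(x)=g(z,x)$. A topology on $Y^X$ (regarded as its Kuratowski closure operator $\sigma$) is admissible if for every closure space $(Z,w)$ and every $g:Z\times X\to Y$ with $g^*(Z)\subset Y^X$, continuity of $g^*:(Z,w)\to(Y^X,\sigma)$ implies continuity of $g:(Z,w)\times(X,u)\to(Y,v)$. *)

theory Defs
  imports "HOL-Analysis.Analysis"
begin

text \<open>Cech closure spaces. The underlying set of a closure space is the whole
  type (UNIV); a closure operator is a map on subsets of the type.\<close>

definition cech_closure :: "('a set \<Rightarrow> 'a set) \<Rightarrow> bool" where
  "cech_closure u \<longleftrightarrow> u {} = {} \<and> (\<forall>A. A \<subseteq> u A) \<and> (\<forall>A B. u (A \<union> B) = u A \<union> u B)"

definition cl_int :: "('a set \<Rightarrow> 'a set) \<Rightarrow> 'a set \<Rightarrow> 'a set" where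
  "cl_int u A = UNIV - u (UNIV - A)"

definition cl_regular :: "('a set \<Rightarrow> 'a set) \<Rightarrow> bool" where
  "cl_regular u \<longleftrightarrow> (\<forall>x A. x \<notin> u A \<longrightarrow>
      (\<exists>U W. x \<in> cl_int u U \<and> A \<subseteq> cl_int u W \<and> U \<inter> W = {}))"

definition cl_continuous :: "('a set \<Rightarrow> 'a set) \<Rightarrow> ('b set \<Rightarrow> 'b set) \<Rightarrow> ('a \<Rightarrow> 'b) \<Rightarrow> bool" where
  "cl_continuous u v f \<longleftrightarrow> (\<forall>A. f ` (u A) \<subseteq> v (f ` A))"

definition interior_cover :: "('a set \<Rightarrow> 'a set) \<Rightarrow> 'a set set \<Rightarrow> bool" where
  "interior_cover u \<C> \<longleftrightarrow> (\<forall>x. \<exists>C\<in>\<C>. x \<in> cl_int u C)"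

definition prod_closure :: "('c set \<Rightarrow> 'c set) \<Rightarrow> ('a set \<Rightarrow> 'a set) \<Rightarrow> ('c \<times> 'a) set \<Rightarrow> ('c \<times> 'a) set" where
  "prod_closure w u A = {(z, x). \<forall>W U. z \<in> cl_int w W \<and> x \<in> cl_int u U \<longrightarrow> (W \<times> U) \<inter> A \<noteq> {}}"

definition cont_maps :: "('a set \<Rightarrow> 'a set) \<Rightarrow> ('b set \<Rightarrow> 'b set) \<Rightarrow> ('a \<Rightarrow> 'b) set" where
  "cont_maps u v = {f. cl_continuous u v f}"

definition C_topology :: "('a set \<Rightarrow> 'a set) \<Rightarrow> ('b set \<Rightarrow> 'b set) \<Rightarrow> 'a set set \<Rightarrow> ('a \<Rightarrow> 'b) topology" where
  "C_topology u v \<C> = topology_generated_by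
     (insert (cont_maps u v)
       {{f \<in> cont_maps u v. f ` (u K) \<subseteq> V} | K V.
          cl_int v V \<noteq> {} \<and> (\<exists>C\<in>\<C>. u K \<subseteq> C)})"

text \<open>Admissibility of a topology T on Y^X (with Kuratowski closure sigma = closure_of T),
  tested against closure spaces Z ranging over the type 'c.\<close>
definition admissible :: "('a set \<Rightarrow> 'a set) \<Rightarrow> ('b set \<Rightarrow> 'b set) \<Rightarrow> ('a \<Rightarrow> 'b) topology
     \<Rightarrow> 'c itself \<Rightarrow> bool" where
  "admissible u v T (Z :: 'c itself) \<longleftrightarrow>
    (\<forall>(w :: 'c set \<Rightarrow> 'c set) (g :: 'c \<times> 'a \<Rightarrow> 'b).
       cech_closure w \<longrightarrow> (curry g) ` UNIV \<subseteq> cont_maps u v \<longrightarrow>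
       cl_continuous w (\<lambda>B. T closure_of B) (curry g) \<longrightarrow>
       cl_continuous (prod_closure w u) v g)"

end

theory Submission
  imports Defs
begin

(* Continuity of g at (z,x) is checked on neighbourhoods: given an interior neighbourhood V of
   g(z,x), the continuous map f = g(z,-) pulls V back to a neighbourhood of x, which we shrink to
   lie in a member C of the cover; regularity of u then gives a neighbourhood U of x with u(U)
   inside it.  So f belongs to the subbasic open set (u(U),V) of the C-topology, and continuity of
   z |-> g(z,-) yields a neighbourhood P of z mapped into (u(U),V).  Hence g(P x U) is in V. *)

lemma cech_closure_mono: "cech_closure u \<Longrightarrow> mono u"
  unfolding cech_closure_def mono_def by (metis sup.absorb_iff1 sup.coboundedI2)

lemma cl_int_Int:
  assumes "cech_closure u"
  shows "cl_int u (A \<inter> B) = cl_int u A \<inter> cl_int u B"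
proof -
  have "UNIV - A \<inter> B = (UNIV - A) \<union> (UNIV - B)" by blast
  then show ?thesis using assms unfolding cech_closure_def cl_int_def by auto
qed

lemma cl_int_closure_of_openin:
  assumes "openin T S"
  shows "S \<subseteq> cl_int (\<lambda>B. T closure_of B) S"
proof -
  have "T closure_of (UNIV - S) = topspace T - S"
    using closure_of_restrict[of T "UNIV - S"] closure_of_complement[of T S]
      interior_of_openin[OF assms] by (simp add: Diff_eq Int_commute)
  then show ?thesis unfolding cl_int_def by blast
qed

lemma cl_continuous_imp_cl_int_vimage:
  assumes "mono v" and "cl_continuous u v f" and "f x \<in> cl_int v V"
  shows "x \<in> cl_int u (f -` V)"
proof (rule ccontr)
  assume "x \<notin> cl_int u (f -` V)"
  then have "f x \<in> v (f ` (UNIV - f -` V))"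
    using assms(2) unfolding cl_int_def cl_continuous_def by blast
  also have "\<dots> \<subseteq> v (UNIV - V)" using assms(1) by (rule monoD) blast
  finally show False using assms(3) unfolding cl_int_def by blast
qed

lemma cl_continuous_if_cl_int_vimage:
  assumes "mono u" and "\<And>x V. f x \<in> cl_int v V \<Longrightarrow> x \<in> cl_int u (f -` V)"
  shows "cl_continuous u v f"
  unfolding cl_continuous_def
proof (intro allI subsetI)
  fix A y assume "y \<in> f ` u A"
  then obtain x where x: "x \<in> u A" "y = f x" by blast
  show "y \<in> v (f ` A)"
  proof (rule ccontr)
    assume "y \<notin> v (f ` A)"
    then have "f x \<in> cl_int v (UNIV - f ` A)"
      using x(2) unfolding cl_int_def by (simp add: Diff_Diff_Int)
    then have "x \<in> cl_int u (f -` (UNIV - f ` A))" by (rule assms(2))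
    moreover have "u A \<subseteq> u (UNIV - f -` (UNIV - f ` A))" using assms(1) by (rule monoD) blast
    ultimately show False using x(1) unfolding cl_int_def by blast
  qed
qed

lemma mono_prod_closure: "mono (prod_closure w u)"
  unfolding mono_def prod_closure_def by blast

lemma cl_int_prod_closure_iff:
  "(z, x) \<in> cl_int (prod_closure w u) S \<longleftrightarrow>
     (\<exists>W U. z \<in> cl_int w W \<and> x \<in> cl_int u U \<and> W \<times> U \<subseteq> S)"
  unfolding cl_int_def prod_closure_def by blast

lemma cl_regular_closure_nhd:
  assumes "cech_closure u" and "cl_regular u" and "x \<in> cl_int u N"
  obtains U where "x \<in> cl_int u U" and "u U \<subseteq> N"
proof -
  have "x \<notin> u (UNIV - N)" using assms(3) unfolding cl_int_def by blast
  then obtain U W where UW: "x \<in> cl_int u U" "UNIV - N \<subseteq> cl_int u W" "U \<inter> W = {}"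
    using assms(2) unfolding cl_regular_def by blast
  have "u U \<subseteq> u (UNIV - W)"
    using cech_closure_mono[OF assms(1)] by (rule monoD) (use UW(3) in blast)
  also have "\<dots> \<subseteq> N" using UW(2) unfolding cl_int_def by blast
  finally show thesis using UW(1) that by blast
qed

lemma openin_C_topology_subbasic:
  assumes "cl_int v V \<noteq> {}" and "C \<in> \<C>" and "u K \<subseteq> C"
  shows "openin (C_topology u v \<C>) {f \<in> cont_maps u v. f ` u K \<subseteq> V}"
  unfolding C_topology_def by (rule topology_generated_by_Basis) (use assms in blast)

theorem theorem9:
  fixes u :: "'a set \<Rightarrow> 'a set" and v :: "'b set \<Rightarrow> 'b set" and \<C> :: "'a set set"
  assumes "cech_closure u" and "cl_regular u" and "cech_closure v"
    and "interior_cover u \<C>"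
  shows "admissible u v (C_topology u v \<C>) TYPE('c)"
  unfolding admissible_def
proof (intro allI impI)
  fix w :: "'c set \<Rightarrow> 'c set" and g :: "'c \<times> 'a \<Rightarrow> 'b"
  assume maps: "range (curry g) \<subseteq> cont_maps u v"
    and cont: "cl_continuous w (\<lambda>B. C_topology u v \<C> closure_of B) (curry g)"
  show "cl_continuous (prod_closure w u) v g"
  proof (rule cl_continuous_if_cl_int_vimage[OF mono_prod_closure], clarify)
    fix z x V assume gV: "g (z, x) \<in> cl_int v V"
    have gz: "curry g z \<in> cont_maps u v" using maps by blast
    then have "cl_continuous u v (curry g z)" unfolding cont_maps_def by simp
    then have "x \<in> cl_int u (curry g z -` V)"
      by (rule cl_continuous_imp_cl_int_vimage[OF cech_closure_mono[OF assms(3)]]) (use gV in simp)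
    moreover obtain C where C: "C \<in> \<C>" "x \<in> cl_int u C"
      using assms(4) unfolding interior_cover_def by blast
    ultimately have "x \<in> cl_int u (curry g z -` V \<inter> C)" by (simp add: cl_int_Int[OF assms(1)])
    then obtain U where U: "x \<in> cl_int u U" "u U \<subseteq> curry g z -` V \<inter> C"
      by (rule cl_regular_closure_nhd[OF assms(1,2)])
    define S where "S = {f \<in> cont_maps u v. f ` u U \<subseteq> V}"
    have "cl_int v V \<noteq> {}" using gV by blast
    then have "openin (C_topology u v \<C>) S"
      unfolding S_def by (rule openin_C_topology_subbasic[OF _ C(1)]) (use U(2) in blast)
    moreover have "curry g z \<in> S" using gz U(2) unfolding S_def by blast
    ultimately have gz_int: "curry g z \<in> cl_int (\<lambda>B. C_topology u v \<C> closure_of B) S"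
      using cl_int_closure_of_openin by blast
    have "z \<in> cl_int w (curry g -` S)"
      by (rule cl_continuous_imp_cl_int_vimage[OF _ cont gz_int]) (simp add: closure_of_mono monoI)
    moreover have "curry g -` S \<times> U \<subseteq> g -` V"
    proof
      fix p assume "p \<in> curry g -` S \<times> U"
      then obtain z' x' where "p = (z', x')" "curry g z' \<in> S" "x' \<in> U" by blast
      moreover have "U \<subseteq> u U" using assms(1) unfolding cech_closure_def by blast
      ultimately show "p \<in> g -` V" unfolding S_def by auto
    qed
    ultimately show "(z, x) \<in> cl_int (prod_closure w u) (g -` V)"
      unfolding cl_int_prod_closure_iff using U(1) by blast
  qed
qed

end
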